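(* Let $m\ge 1$, let $S=\{1,\dots,m\}$, and let $\phi:S\times S\to\{+1,-1\}$ be any symmetric function. Then there exist an integer $n\le 2m$ and a map $\sigma:S\to\mathbb{Z}_2^n$, $i\mapsto\sigma_i$, such that for all $i,j\in S$, $$\phi(i,j)=(-1)^{\langle\sigma_i,\sigma_j\rangle_n},$$ where $\langle(i_1,\dots,i_n),(j_1,\dots,j_n)\rangle_n=i_1j_1+\dots+i_nj_n$ (computed mod $2$) is the standard `scalar product' on $\mathbb{Z}_2^n$.
   Context: The function $\phi$ is thought of as a sign rule $y^iy^j=\phi(i,j)y^jy^i$ for generators $y^1,\dots,y^m$ of an associative algebra; the theorem says every such sign rule is of $\mathbb{Z}_2^n$-commutative type for some $n\le 2m$. *)

theory Defs
  imports Main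
begin

text \<open>Vectors in Z_2^n are represented as functions v :: nat => nat with v k in {0,1}
  for k < n (components indexed 0..n-1). The standard scalar product is computed mod 2.\<close>

definition is_Z2_vec :: "nat \<Rightarrow> (nat \<Rightarrow> nat) \<Rightarrow> bool" where
  "is_Z2_vec n v \<longleftrightarrow> (\<forall>k<n. v k \<in> {0, 1})"

definition Z2_scalar :: "nat \<Rightarrow> (nat \<Rightarrow> nat) \<Rightarrow> (nat \<Rightarrow> nat) \<Rightarrow> nat" where
  "Z2_scalar n v w = (\<Sum>k<n. v k * w k) mod 2"

end

theory Submission
  imports Defs
begin

text \<open>Writing \<open>\<phi> i j = (-1)^(a i j)\<close>, the claim is that every symmetric \<open>m \<times> m\<close> matrix \<open>a\<close> over
  \<open>\<int>\<^sub>2\<close> is the Gram matrix of \<open>m\<close> vectors in \<open>\<int>\<^sub>2\<^sup>2\<^sup>m\<close>. Induct on \<open>m\<close>, removing an index \<open>t\<close>: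
  realise \<open>a\<^sub>i\<^sub>j + a\<^sub>i\<^sub>t a\<^sub>j\<^sub>t\<close> on the remaining indices by induction, append the coordinates
  \<open>(a\<^sub>i\<^sub>t, 0)\<close> to each of these vectors and give \<open>t\<close> the vector \<open>(0, \<dots>, 0, 1, 1 + a\<^sub>t\<^sub>t)\<close>.
  The first new coordinate restores \<open>a\<^sub>i\<^sub>j\<close> and produces \<open>a\<^sub>i\<^sub>t\<close>; the second fixes the diagonal
  entry of \<open>t\<close>, since \<open>1 + (1 + a\<^sub>t\<^sub>t)\<^sup>2 \<equiv> a\<^sub>t\<^sub>t\<close>.\<close>

definition Z2_extend :: "nat \<Rightarrow> (nat \<Rightarrow> nat) \<Rightarrow> nat \<Rightarrow> nat \<Rightarrow> nat \<Rightarrow> nat" where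
  "Z2_extend n v x y = (\<lambda>k. if k < n then v k else if k = n then x else if k = n + 1 then y else 0)"

lemma is_Z2_vec_Z2_extend:
  assumes "is_Z2_vec n v" and "x < 2" and "y < 2"
  shows "is_Z2_vec (Suc (Suc n)) (Z2_extend n v x y)"
  using assms by (auto simp: is_Z2_vec_def Z2_extend_def less_2_cases_iff)

lemma Z2_scalar_Z2_extend:
  "Z2_scalar (Suc (Suc n)) (Z2_extend n v x y) (Z2_extend n w x' y') =
     (Z2_scalar n v w + x * x' + y * y') mod 2"
proof -
  have "(\<Sum>k<Suc (Suc n). Z2_extend n v x y k * Z2_extend n w x' y' k) =
      (\<Sum>k<n. v k * w k) + x * x' + y * y'"
    by (simp add: Z2_extend_def)
  then show ?thesis
    unfolding Z2_scalar_def by (simp only: add.assoc mod_add_left_eq)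
qed

lemma Z2_scalar_zero_left [simp]: "Z2_scalar n (\<lambda>_. 0) w = 0"
  and Z2_scalar_zero_right [simp]: "Z2_scalar n v (\<lambda>_. 0) = 0"
  by (simp_all add: Z2_scalar_def)

lemma symmetric_Z2_matrix_is_Gram:
  fixes a :: "'a \<Rightarrow> 'a \<Rightarrow> nat"
  assumes "finite I" and "\<forall>i\<in>I. \<forall>j\<in>I. a i j = a j i"
  shows "\<exists>\<sigma>. (\<forall>i\<in>I. is_Z2_vec (2 * card I) (\<sigma> i)) \<and>
    (\<forall>i\<in>I. \<forall>j\<in>I. Z2_scalar (2 * card I) (\<sigma> i) (\<sigma> j) = a i j mod 2)"
  using assms
proof (induction I arbitrary: a rule: finite_induct)
  case empty
  then show ?case by simp
next
  case (insert t F)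
  define n where "n = 2 * card F"
  have n_insert: "2 * card (insert t F) = Suc (Suc n)"
    using insert.hyps by (simp add: n_def)
  have sym: "a i j = a j i" if "i \<in> insert t F" "j \<in> insert t F" for i j
    using insert.prems that by blast
  obtain \<sigma>' where vec': "\<forall>i\<in>F. is_Z2_vec n (\<sigma>' i)"
    and gram': "\<forall>i\<in>F. \<forall>j\<in>F. Z2_scalar n (\<sigma>' i) (\<sigma>' j) = (a i j + a i t * a j t) mod 2"
    using insert.IH[of "\<lambda>i j. a i j + a i t * a j t"] sym unfolding n_def
    by (metis insertCI mult.commute)
  define \<sigma> where "\<sigma> i = (if i = t then Z2_extend n (\<lambda>_. 0) 1 ((1 + a t t) mod 2)
                         else Z2_extend n (\<sigma>' i) (a i t mod 2) 0)" for i
  have "is_Z2_vec n (\<lambda>_. 0)"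
    by (simp add: is_Z2_vec_def)
  then have vec: "is_Z2_vec (Suc (Suc n)) (\<sigma> i)" if "i \<in> insert t F" for i
    using that vec' unfolding \<sigma>_def
    by (cases "i = t") (auto intro: is_Z2_vec_Z2_extend)
  have gram: "Z2_scalar (Suc (Suc n)) (\<sigma> i) (\<sigma> j) = a i j mod 2"
    if i: "i \<in> insert t F" and j: "j \<in> insert t F" for i j
  proof (cases "i = t"; cases "j = t")
    assume "i = t" "j = t"
    have "(1 + (1 + a t t) mod 2 * ((1 + a t t) mod 2)) mod 2 = a t t mod 2"
      by (cases "even (a t t)") (auto elim!: evenE oddE)
    with \<open>i = t\<close> \<open>j = t\<close> show ?thesis
      by (simp add: \<sigma>_def Z2_scalar_Z2_extend)
  next
    assume "i = t" "j \<noteq> t"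
    then show ?thesis
      using sym[OF i j] by (simp add: \<sigma>_def Z2_scalar_Z2_extend)
  next
    assume "i \<noteq> t" "j = t"
    then show ?thesis
      by (simp add: \<sigma>_def Z2_scalar_Z2_extend)
  next
    assume "i \<noteq> t" "j \<noteq> t"
    then have "i \<in> F" "j \<in> F" using i j by auto
    with \<open>i \<noteq> t\<close> \<open>j \<noteq> t\<close> gram' have "Z2_scalar (Suc (Suc n)) (\<sigma> i) (\<sigma> j)
        = ((a i j + a i t * a j t) mod 2 + a i t mod 2 * (a j t mod 2)) mod 2"
      by (simp add: \<sigma>_def Z2_scalar_Z2_extend)
    also have "\<dots> = ((a i j + a i t * a j t) mod 2 + a i t * a j t mod 2) mod 2"
      by (metis mod_add_right_eq mod_mult_eq)
    also have "\<dots> = (a i j + 2 * (a i t * a j t)) mod 2"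
      by (simp add: mod_add_eq add.assoc flip: mult_2)
    finally show ?thesis by simp
  qed
  show ?case
    unfolding n_insert using vec gram by blast
qed

theorem theorem1:
  fixes m :: nat and \<phi> :: "nat \<Rightarrow> nat \<Rightarrow> int"
  assumes "m \<ge> 1"
    and "\<forall>i\<in>{1..m}. \<forall>j\<in>{1..m}. \<phi> i j \<in> {1, -1}"
    and "\<forall>i\<in>{1..m}. \<forall>j\<in>{1..m}. \<phi> i j = \<phi> j i"
  shows "\<exists>n::nat. n \<le> 2 * m \<and> (\<exists>\<sigma> :: nat \<Rightarrow> nat \<Rightarrow> nat.
           (\<forall>i\<in>{1..m}. is_Z2_vec n (\<sigma> i)) \<and>
           (\<forall>i\<in>{1..m}. \<forall>j\<in>{1..m}. \<phi> i j = (-1) ^ Z2_scalar n (\<sigma> i) (\<sigma> j)))"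
proof -
  define a where "a i j = (if \<phi> i j = 1 then 0 else 1 :: nat)" for i j
  have "\<forall>i\<in>{1..m}. \<forall>j\<in>{1..m}. a i j = a j i"
    using assms(3) by (simp add: a_def)
  then obtain \<sigma> where vec: "\<forall>i\<in>{1..m}. is_Z2_vec (2 * m) (\<sigma> i)"
    and gram: "\<forall>i\<in>{1..m}. \<forall>j\<in>{1..m}. Z2_scalar (2 * m) (\<sigma> i) (\<sigma> j) = a i j mod 2"
    using symmetric_Z2_matrix_is_Gram[of "{1..m}" a] by auto
  have "\<phi> i j = (-1) ^ Z2_scalar (2 * m) (\<sigma> i) (\<sigma> j)" if "i \<in> {1..m}" "j \<in> {1..m}" for i j
  proof -
    have "\<phi> i j = 1 \<or> \<phi> i j = -1"
      using assms(2) that by blast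
    then show ?thesis
      using gram that by (auto simp: a_def)
  qed
  with vec show ?thesis by blast
qed

end
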